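(* Let $\alpha\in(0,1)$ satisfy $\frac{1-\alpha}{1+\alpha}<\alpha^{1/2}$, and fix $W_0,H_0>0$, $b_x,b_y\in\mathbb{R}$, $i,j,m,n\in\mathbb{Z}$. For $(i_1,i_2,j_1,j_2,m_1,m_2,n_1,n_2)\in[-\tfrac12,\tfrac12]^8$ define two boxes by $w_k=W_0/\alpha^{i+i_k}$, $h_k=H_0/\alpha^{j+j_k}$, $x_k=b_x\delta_i+(m+m_k)\delta_i$, $y_k=b_y\delta_j+(n+n_k)\delta_j$ ($k=1,2$), with $\delta_i=\frac{W_0}{\alpha^{i}}\frac{1-\alpha}{1+\alpha}$, $\delta_j=\frac{H_0}{\alpha^{j}}\frac{1-\alpha}{1+\alpha}$. Then the minimum of the IoU of the two boxes over $[-\tfrac12,\tfrac12]^8$ is attained at a vertex, i.e. at a point where each of $i_k,j_k,m_k,n_k$ ($k=1,2$) equals $-\tfrac12$ or $\tfrac12$. Consequently, the lower bound on the IoU of any two boxes hashed to the same cell equals the minimum of the IoU over the $2^8$ vertices (and is independent of $W_0,H_0,b_x,b_y,i,j,m,n$). *)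

theory Defs
  imports Complex_Main
begin

text \<open>Axis-aligned box given b_y (centre x, centre y, width w, height h).\<close>
type_synonym box = "real \<times> real \<times> real \<times> real"

definition overlap1 :: "real \<Rightarrow> real \<Rightarrow> real \<Rightarrow> real \<Rightarrow> real" where
  "overlap1 c1 l1 c2 l2 =
     max 0 (min (c1 + l1/2) (c2 + l2/2) - max (c1 - l1/2) (c2 - l2/2))"

definition inter_area :: "box \<Rightarrow> box \<Rightarrow> real" where
  "inter_area b1 b2 = (case b1 of (x1,y1,w1,h1) \<Rightarrow> case b2 of (x2,y2,w2,h2) \<Rightarrow>
      overlap1 x1 w1 x2 w2 * overlap1 y1 h1 y2 h2)"

definition union_area :: "box \<Rightarrow> box \<Rightarrow> real" where
  "union_area b1 b2 = (case b1 of (x1,y1,w1,h1) \<Rightarrow> case b2 of (x2,y2,w2,h2) \<Rightarrow>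
      w1*h1 + w2*h2 - inter_area b1 b2)"

definition IoU :: "box \<Rightarrow> box \<Rightarrow> real" where
  "IoU b1 b2 = inter_area b1 b2 / union_area b1 b2"

definition hbox :: "real \<Rightarrow> real \<Rightarrow> real \<Rightarrow> real \<Rightarrow> real \<Rightarrow> int \<Rightarrow> int \<Rightarrow> int \<Rightarrow> int
      \<Rightarrow> real \<Rightarrow> real \<Rightarrow> real \<Rightarrow> real \<Rightarrow> box" where
  "hbox \<alpha> W0 H0 b_x b_y i j m n ik jk mk nk =
     (let di = W0 / \<alpha> powr (real_of_int i) * ((1 - \<alpha>) / (1 + \<alpha>));
          dj = H0 / \<alpha> powr (real_of_int j) * ((1 - \<alpha>) / (1 + \<alpha>))
      in (b_x * di + (real_of_int m + mk) * di,
          b_y * dj + (real_of_int n + nk) * dj,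
          W0 / \<alpha> powr (real_of_int i + ik),
          H0 / \<alpha> powr (real_of_int j + jk)))"

definition hiou :: "real \<Rightarrow> real \<Rightarrow> real \<Rightarrow> real \<Rightarrow> real \<Rightarrow> int \<Rightarrow> int \<Rightarrow> int \<Rightarrow> int
      \<Rightarrow> real \<Rightarrow> real \<Rightarrow> real \<Rightarrow> real \<Rightarrow> real \<Rightarrow> real \<Rightarrow> real \<Rightarrow> real \<Rightarrow> real" where
  "hiou \<alpha> W0 H0 b_x b_y i j m n i1 i2 j1 j2 m1 m2 n1 n2 =
     IoU (hbox \<alpha> W0 H0 b_x b_y i j m n i1 j1 m1 n1) (hbox \<alpha> W0 H0 b_x b_y i j m n i2 j2 m2 n2)"

definition vert :: "real set" where "vert = {-1/2, 1/2}"
definition cube :: "real set" where "cube = {-1/2..1/2}"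

definition vertex_min :: "real \<Rightarrow> real \<Rightarrow> real \<Rightarrow> real \<Rightarrow> real \<Rightarrow> int \<Rightarrow> int \<Rightarrow> int \<Rightarrow> int \<Rightarrow> real" where
  "vertex_min \<alpha> W0 H0 b_x b_y i j m n =
     Min {hiou \<alpha> W0 H0 b_x b_y i j m n i1 i2 j1 j2 m1 m2 n1 n2 | i1 i2 j1 j2 m1 m2 n1 n2.
            i1 \<in> vert \<and> i2 \<in> vert \<and> j1 \<in> vert \<and> j2 \<in> vert \<and>
            m1 \<in> vert \<and> m2 \<in> vert \<and> n1 \<in> vert \<and> n2 \<in> vert}"

end

theory Submission
  imports Defs
begin

(*
  Fix all offsets but one. The box parameters are monotone in that offset, and the
  one-dimensional overlap is a clipped minimum of affine functions of both the centre and
  the side length. Since IoU \<ge> t amounts to (1 + t) * intersection \<ge> t * (sum of areas),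
  every superlevel set of the IoU in that offset is an interval: the IoU is quasiconcave in
  each offset separately. Moving the offsets one at a time to the better endpoint of
  [-1/2, 1/2] therefore yields a vertex whose IoU is at most that of any given point.
  Changing W0, H0, b_x, b_y, i, j, m, n transforms both boxes by one affine map per axis
  (scaling plus translation), which leaves the IoU invariant.
*)

definition quasiconcave_on :: "real set \<Rightarrow> (real \<Rightarrow> real) \<Rightarrow> bool" where
  "quasiconcave_on S f \<longleftrightarrow>
     (\<forall>l\<in>S. \<forall>u\<in>S. \<forall>x\<in>S. l \<le> x \<longrightarrow> x \<le> u \<longrightarrow> min (f l) (f u) \<le> f x)"

lemma quasiconcave_onD:
  "quasiconcave_on S f \<Longrightarrow> l \<in> S \<Longrightarrow> u \<in> S \<Longrightarrow> x \<in> S \<Longrightarrow> l \<le> x \<Longrightarrow> x \<le> u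
    \<Longrightarrow> min (f l) (f u) \<le> f x"
  unfolding quasiconcave_on_def by blast

text \<open>The hypothesis says that \<open>f\<close> is affine, without naming its coefficients.\<close>

lemma quasiconcave_on_affineI:
  assumes "\<And>x. f x = f 0 + (f 1 - f 0) * x"
  shows "quasiconcave_on S f"
  unfolding quasiconcave_on_def
proof (intro ballI impI)
  fix l u x :: real assume "l \<le> x" "x \<le> u"
  then show "min (f l) (f u) \<le> f x"
    using mult_left_mono[of l x "f 1 - f 0"] mult_left_mono[of x u "f 1 - f 0"]
      mult_left_mono_neg[of l x "f 1 - f 0"] mult_left_mono_neg[of x u "f 1 - f 0"]
    by (subst (1 2 3) assms) (cases "f 1 - f 0 \<ge> 0"; simp)
qed

lemma quasiconcave_on_min:
  assumes "quasiconcave_on S f" "quasiconcave_on S g"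
  shows "quasiconcave_on S (\<lambda>x. min (f x) (g x))"
  unfolding quasiconcave_on_def
proof (intro ballI impI)
  fix l u x assume "l \<in> S" "u \<in> S" "x \<in> S" "l \<le> x" "x \<le> u"
  then have "min (f l) (f u) \<le> f x" "min (g l) (g u) \<le> g x"
    using quasiconcave_onD[OF assms(1)] quasiconcave_onD[OF assms(2)] by blast+
  then show "min (min (f l) (g l)) (min (f u) (g u)) \<le> min (f x) (g x)"
    by (auto simp: min_le_iff_disj)
qed

lemma quasiconcave_on_postcompose_mono:
  assumes "quasiconcave_on S g" "mono_on (g ` S) F"
  shows "quasiconcave_on S (\<lambda>x. F (g x))"
  unfolding quasiconcave_on_def
proof (intro ballI impI)
  fix l u x assume S: "l \<in> S" "u \<in> S" "x \<in> S" and "l \<le> x" "x \<le> u"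
  then have "g l \<le> g x \<or> g u \<le> g x"
    using quasiconcave_onD[OF assms(1)] by fastforce
  then show "min (F (g l)) (F (g u)) \<le> F (g x)"
  proof
    assume "g l \<le> g x"
    then have "F (g l) \<le> F (g x)" using S by (auto intro: mono_onD[OF assms(2)])
    then show ?thesis by (rule min.coboundedI1)
  next
    assume "g u \<le> g x"
    then have "F (g u) \<le> F (g x)" using S by (auto intro: mono_onD[OF assms(2)])
    then show ?thesis by (rule min.coboundedI2)
  qed
qed

lemma quasiconcave_on_precompose_mono:
  assumes "quasiconcave_on T f" "mono_on S \<phi>" "\<phi> ` S \<subseteq> T"
  shows "quasiconcave_on S (\<lambda>x. f (\<phi> x))"
  unfolding quasiconcave_on_def
  using quasiconcave_onD[OF assms(1)] mono_onD[OF assms(2)] assms(3) by (simp add: image_subset_iff)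

lemma quasiconcave_on_superlevelI:
  assumes nonneg: "\<And>x. x \<in> S \<Longrightarrow> 0 \<le> f x"
    and superlevel: "\<And>t. 0 < t \<Longrightarrow>
      \<exists>\<psi>. quasiconcave_on S \<psi> \<and> (\<forall>x\<in>S. t \<le> f x \<longleftrightarrow> 0 \<le> \<psi> x)"
  shows "quasiconcave_on S f"
  unfolding quasiconcave_on_def
proof (intro ballI impI)
  fix l u x assume S: "l \<in> S" "u \<in> S" "x \<in> S" and "l \<le> x" "x \<le> u"
  define t where "t = min (f l) (f u)"
  show "min (f l) (f u) \<le> f x"
  proof (cases "0 < t")
    case False
    then show ?thesis using nonneg[OF S(3)] t_def by linarith
  next
    case True
    then obtain \<psi> where \<psi>: "quasiconcave_on S \<psi>" and iff: "\<And>y. y \<in> S \<Longrightarrow> t \<le> f y \<longleftrightarrow> 0 \<le> \<psi> y"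
      using superlevel by blast
    have "t \<le> f l" "t \<le> f u" by (simp_all add: t_def)
    then have "0 \<le> \<psi> l" "0 \<le> \<psi> u" using iff S(1,2) by blast+
    then have "0 \<le> \<psi> x"
      using quasiconcave_onD[OF \<psi> S] \<open>l \<le> x\<close> \<open>x \<le> u\<close> by linarith
    then show ?thesis using iff[OF S(3)] t_def by blast
  qed
qed

lemma quasiconcave_on_cube_vertex_le:
  assumes "quasiconcave_on cube f" "t \<in> cube"
  shows "\<exists>v\<in>vert. f v \<le> f t"
proof -
  have "min (f (-1/2)) (f (1/2)) \<le> f t"
    using quasiconcave_onD[OF assms(1)] assms(2) by (simp add: cube_def)
  then show ?thesis by (auto simp: vert_def min_def split: if_splits)
qed

lemma coordinatewise_quasiconcave_vertex_le:
  fixes f :: "(nat \<Rightarrow> real) \<Rightarrow> real"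
  assumes qc: "\<And>k p. k < N \<Longrightarrow> \<forall>i<N. p i \<in> cube \<Longrightarrow> quasiconcave_on cube (\<lambda>t. f (p(k := t)))"
    and "n \<le> N" "\<forall>i<N. p i \<in> cube"
  shows "\<exists>v. (\<forall>i<n. v i \<in> vert) \<and> (\<forall>i\<ge>n. v i = p i) \<and> f v \<le> f p"
  using assms(2,3)
proof (induction n)
  case 0
  then show ?case by auto
next
  case (Suc n)
  then obtain v where v: "\<forall>i<n. v i \<in> vert" "\<forall>i\<ge>n. v i = p i" "f v \<le> f p"
    by auto
  have "vert \<subseteq> cube" by (simp add: vert_def cube_def)
  then have "\<forall>i<N. v i \<in> cube" using v Suc.prems(2) by (metis not_le subsetD)
  moreover have "v n \<in> cube" using v(2) Suc.prems by simp
  ultimately obtain c where "c \<in> vert" "f (v(n := c)) \<le> f (v(n := v n))"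
    using quasiconcave_on_cube_vertex_le[OF qc] Suc.prems(1) by (metis Suc_le_lessD)
  then have "f (v(n := c)) \<le> f p" using v(3) by simp
  show ?case
  proof (intro exI[of _ "v(n := c)"] conjI)
    show "\<forall>i<Suc n. (v(n := c)) i \<in> vert" using \<open>c \<in> vert\<close> v(1) by (simp add: less_Suc_eq)
    show "\<forall>i\<ge>Suc n. (v(n := c)) i = p i" using v(2) by simp
  qed fact
qed

lemma min_diff_max:
  fixes a b c d :: "'a::linordered_ab_group_add"
  shows "min a b - max c d = min (min (a - c) (a - d)) (min (b - c) (b - d))"
  by (auto simp: min_def max_def)

lemma overlap1_eq_min:
  "overlap1 c l c' l' =
     max 0 (min (min l ((l + l') / 2 + (c - c'))) (min ((l + l') / 2 - (c - c')) l'))"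
proof -
  have "c + l / 2 - (c - l / 2) = l" "c' + l' / 2 - (c' - l' / 2) = l'"
       "c + l / 2 - (c' - l' / 2) = (l + l') / 2 + (c - c')"
       "c' + l' / 2 - (c - l / 2) = (l + l') / 2 - (c - c')"
    by (simp_all add: field_simps)
  then show ?thesis unfolding overlap1_def min_diff_max by (simp only:)
qed

lemma overlap1_nonneg: "0 \<le> overlap1 c l c' l'"
  by (simp add: overlap1_def)

lemma overlap1_le: "0 \<le> l \<Longrightarrow> overlap1 c l c' l' \<le> l"
  by (simp add: overlap1_eq_min)

lemma overlap1_commute: "overlap1 c l c' l' = overlap1 c' l' c l"
  by (simp add: overlap1_def min.commute max.commute)

lemma overlap1_scale:
  assumes "0 < s"
  shows "overlap1 (s * c + e) (s * l) (s * c' + e) (s * l') = s * overlap1 c l c' l'"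
proof -
  have shift: "(s * l + s * l') / 2 + (s * c + e - (s * c' + e)) = s * ((l + l') / 2 + (c - c'))"
      "(s * l + s * l') / 2 - (s * c + e - (s * c' + e)) = s * ((l + l') / 2 - (c - c'))"
    by (simp_all add: algebra_simps)
  have scale: "min (s * a) (s * b) = s * min a b" "max 0 (s * a) = s * max 0 a" for a b
    using assms by (simp_all add: min_mult_distrib_left max_mult_distrib_left)
  show ?thesis unfolding overlap1_eq_min shift scale ..
qed

lemma quasiconcave_overlap1_center: "quasiconcave_on S (\<lambda>c. overlap1 c l c' l')"
  unfolding overlap1_eq_min
  by (intro quasiconcave_on_postcompose_mono[where F = "max 0"] quasiconcave_on_min
        quasiconcave_on_affineI mono_onI) (auto simp: algebra_simps)

lemma IoU_eq_overlap1:
  "IoU (x1, y1, w1, h1) (x2, y2, w2, h2) =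
     overlap1 x1 w1 x2 w2 * overlap1 y1 h1 y2 h2
       / (w1 * h1 + w2 * h2 - overlap1 x1 w1 x2 w2 * overlap1 y1 h1 y2 h2)"
  by (simp add: IoU_def inter_area_def union_area_def)

lemma IoU_commute: "IoU b1 b2 = IoU b2 b1"
  by (cases b1; cases b2) (simp add: IoU_eq_overlap1 overlap1_commute mult.commute add.commute)

lemma IoU_transpose: "IoU (x1, y1, w1, h1) (x2, y2, w2, h2) = IoU (y1, x1, h1, w1) (y2, x2, h2, w2)"
  by (simp add: IoU_eq_overlap1 mult.commute)

lemma IoU_scale:
  assumes "0 < s" "0 < r"
  shows "IoU (s * x1 + e, r * y1 + f, s * w1, r * h1) (s * x2 + e, r * y2 + f, s * w2, r * h2)
       = IoU (x1, y1, w1, h1) (x2, y2, w2, h2)"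
proof -
  define I where "I = overlap1 x1 w1 x2 w2 * overlap1 y1 h1 y2 h2"
  have "IoU (s * x1 + e, r * y1 + f, s * w1, r * h1) (s * x2 + e, r * y2 + f, s * w2, r * h2)
      = (s * r) * I / ((s * r) * (w1 * h1 + w2 * h2 - I))"
    unfolding IoU_eq_overlap1 overlap1_scale[OF assms(1)] overlap1_scale[OF assms(2)] I_def
    by (simp add: algebra_simps)
  also have "\<dots> = IoU (x1, y1, w1, h1) (x2, y2, w2, h2)"
    using assms by (simp add: IoU_eq_overlap1 I_def)
  finally show ?thesis .
qed

lemma le_IoU_iff:
  assumes "0 < w1" "0 < h1" "0 < w2" "0 < h2"
  shows "t \<le> IoU (x1, y1, w1, h1) (x2, y2, w2, h2) \<longleftrightarrow>
    t * (w1 * h1 + w2 * h2) \<le> (1 + t) * (overlap1 x1 w1 x2 w2 * overlap1 y1 h1 y2 h2)"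
proof -
  define I where "I = overlap1 x1 w1 x2 w2 * overlap1 y1 h1 y2 h2"
  have "I \<le> w1 * h1"
    unfolding I_def using assms
    by (intro mult_mono overlap1_le overlap1_nonneg) auto
  then have "0 < w1 * h1 + w2 * h2 - I" using assms by (smt (verit) mult_pos_pos)
  then show ?thesis
    unfolding IoU_eq_overlap1 I_def[symmetric] by (simp add: pos_le_divide_eq algebra_simps)
qed

lemma IoU_nonneg:
  assumes "0 < w1" "0 < h1" "0 < w2" "0 < h2"
  shows "0 \<le> IoU (x1, y1, w1, h1) (x2, y2, w2, h2)"
  using le_IoU_iff[OF assms, of 0] by (simp add: overlap1_nonneg)

lemma quasiconcave_IoU_center_x:
  assumes "0 < w1" "0 < h1" "0 < w2" "0 < h2"
  shows "quasiconcave_on S (\<lambda>x. IoU (x, y1, w1, h1) (x2, y2, w2, h2))"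
proof (rule quasiconcave_on_superlevelI)
  fix t :: real assume "0 < t"
  define K where "K = overlap1 y1 h1 y2 h2"
  have "0 \<le> (1 + t) * K" using \<open>0 < t\<close> by (simp add: K_def overlap1_nonneg)
  then have "quasiconcave_on S (\<lambda>x. (1 + t) * K * overlap1 x w1 x2 w2 - t * (w1 * h1 + w2 * h2))"
    by (intro quasiconcave_on_postcompose_mono[OF quasiconcave_overlap1_center] mono_onI)
      (simp add: mult_left_mono)
  moreover have "t \<le> IoU (x, y1, w1, h1) (x2, y2, w2, h2) \<longleftrightarrow>
      0 \<le> (1 + t) * K * overlap1 x w1 x2 w2 - t * (w1 * h1 + w2 * h2)" for x
    unfolding le_IoU_iff[OF assms] K_def by (simp add: algebra_simps)
  ultimately show "\<exists>\<psi>. quasiconcave_on S \<psi> \<and> (\<forall>x\<in>S. t \<le> IoU (x, y1, w1, h1) (x2, y2, w2, h2) \<longleftrightarrow> 0 \<le> \<psi> x)"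
    by blast
qed (rule IoU_nonneg[OF assms])

text \<open>For \<open>w\<close> with \<open>IoU \<ge> t > 0\<close> the boxes overlap, so the clipping \<open>max 0\<close> in the
  horizontal overlap can be dropped and the superlevel condition becomes concave in \<open>w\<close>.\<close>

lemma quasiconcave_IoU_width:
  assumes "0 < h1" "0 < w2" "0 < h2"
  shows "quasiconcave_on {0<..} (\<lambda>w. IoU (x1, y1, w, h1) (x2, y2, w2, h2))"
proof (rule quasiconcave_on_superlevelI)
  fix t :: real assume "0 < t"
  define c where "c = (1 + t) * overlap1 y1 h1 y2 h2"
  define g where "g w = min (min w ((w + w2) / 2 + (x1 - x2))) (min ((w + w2) / 2 - (x1 - x2)) w2)"
    for w
  define \<psi> where "\<psi> w = c * g w - t * (w * h1 + w2 * h2)" for w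
  have "0 \<le> c" using \<open>0 < t\<close> by (simp add: c_def overlap1_nonneg)
  then have "\<psi> = (\<lambda>w. min (min (c * w - t * (w * h1 + w2 * h2))
                              (c * ((w + w2) / 2 + (x1 - x2)) - t * (w * h1 + w2 * h2)))
                         (min (c * ((w + w2) / 2 - (x1 - x2)) - t * (w * h1 + w2 * h2))
                              (c * w2 - t * (w * h1 + w2 * h2))))"
    by (simp add: \<psi>_def g_def fun_eq_iff min_mult_distrib_left min_diff_distrib_left)
  then have "quasiconcave_on {0<..} \<psi>"
    by (simp only:) (intro quasiconcave_on_min quasiconcave_on_affineI; simp add: field_simps)
  moreover have "t \<le> IoU (x1, y1, w, h1) (x2, y2, w2, h2) \<longleftrightarrow> 0 \<le> \<psi> w" if "0 < w" for w
  proof -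
    have "0 < t * (w * h1 + w2 * h2)" using \<open>0 < t\<close> that assms by (simp add: add_pos_pos)
    moreover have "overlap1 x1 w x2 w2 = max 0 (g w)" by (simp add: overlap1_eq_min g_def)
    moreover have "c * g w \<le> 0" if "g w < 0" using \<open>0 \<le> c\<close> that by (simp add: mult_nonneg_nonpos)
    ultimately show ?thesis
      unfolding le_IoU_iff[OF that assms] \<psi>_def c_def by (cases "0 \<le> g w") (auto simp: algebra_simps)
  qed
  ultimately show "\<exists>\<psi>. quasiconcave_on {0<..} \<psi> \<and>
      (\<forall>w\<in>{0<..}. t \<le> IoU (x1, y1, w, h1) (x2, y2, w2, h2) \<longleftrightarrow> 0 \<le> \<psi> w)"
    by auto
qed (use IoU_nonneg assms in auto)

lemma quasiconcave_IoU_center_y: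
  assumes "0 < w1" "0 < h1" "0 < w2" "0 < h2"
  shows "quasiconcave_on S (\<lambda>y. IoU (x1, y, w1, h1) (x2, y2, w2, h2))"
proof -
  have "IoU (x1, y, w1, h1) (x2, y2, w2, h2) = IoU (y, x1, h1, w1) (y2, x2, h2, w2)" for y
    by (rule IoU_transpose)
  then show ?thesis using quasiconcave_IoU_center_x[of h1 w1 h2 w2] assms by simp
qed

lemma quasiconcave_IoU_height:
  assumes "0 < w1" "0 < w2" "0 < h2"
  shows "quasiconcave_on {0<..} (\<lambda>h. IoU (x1, y1, w1, h) (x2, y2, w2, h2))"
proof -
  have "IoU (x1, y1, w1, h) (x2, y2, w2, h2) = IoU (y1, x1, h, w1) (y2, x2, h2, w2)" for h
    by (rule IoU_transpose)
  then show ?thesis using quasiconcave_IoU_width[of w1 h2 w2] assms by simp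
qed

definition cell_spacing :: "real \<Rightarrow> real \<Rightarrow> int \<Rightarrow> real" where
  "cell_spacing \<alpha> L k = L / \<alpha> powr real_of_int k * ((1 - \<alpha>) / (1 + \<alpha>))"

definition cell_center :: "real \<Rightarrow> real \<Rightarrow> real \<Rightarrow> int \<Rightarrow> int \<Rightarrow> real \<Rightarrow> real" where
  "cell_center \<alpha> L b k c t = b * cell_spacing \<alpha> L k + (real_of_int c + t) * cell_spacing \<alpha> L k"

definition cell_size :: "real \<Rightarrow> real \<Rightarrow> int \<Rightarrow> real \<Rightarrow> real" where
  "cell_size \<alpha> L k t = L / \<alpha> powr (real_of_int k + t)"

lemma hbox_eq_cell:
  "hbox \<alpha> W0 H0 b_x b_y i j m n ik jk mk nk =
     (cell_center \<alpha> W0 b_x i m mk, cell_center \<alpha> H0 b_y j n nk, cell_size \<alpha> W0 i ik, cell_size \<alpha> H0 j jk)"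
  by (simp add: hbox_def Let_def cell_center_def cell_size_def cell_spacing_def)

lemma mono_cell_center:
  assumes "0 < \<alpha>" "\<alpha> \<le> 1" "0 \<le> L"
  shows "mono (cell_center \<alpha> L b k c)"
proof
  have "0 \<le> cell_spacing \<alpha> L k" using assms by (simp add: cell_spacing_def)
  then show "cell_center \<alpha> L b k c s \<le> cell_center \<alpha> L b k c t" if "s \<le> t" for s t
    using that by (simp add: cell_center_def mult_right_mono)
qed

lemma cell_size_pos: "0 < \<alpha> \<Longrightarrow> 0 < L \<Longrightarrow> 0 < cell_size \<alpha> L k t"
  by (simp add: cell_size_def)

lemma mono_cell_size:
  assumes "0 < \<alpha>" "\<alpha> \<le> 1" "0 < L"
  shows "mono (cell_size \<alpha> L k)"
proof
  show "cell_size \<alpha> L k s \<le> cell_size \<alpha> L k t" if "s \<le> t" for s t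
    unfolding cell_size_def using assms that by (intro divide_left_mono powr_mono') auto
qed

lemma cell_spacing_scale:
  "0 < \<alpha> \<Longrightarrow> cell_spacing \<alpha> L k = L / \<alpha> powr real_of_int k * cell_spacing \<alpha> 1 0"
  by (simp add: cell_spacing_def)

lemma cell_center_scale:
  assumes "0 < \<alpha>"
  shows "cell_center \<alpha> L b k c t
       = L / \<alpha> powr real_of_int k * cell_center \<alpha> 1 0 0 0 t + (b + real_of_int c) * cell_spacing \<alpha> L k"
  using assms by (simp add: cell_center_def cell_spacing_scale[of \<alpha> L k] algebra_simps add_divide_distrib)

lemma cell_size_scale: "0 < \<alpha> \<Longrightarrow> cell_size \<alpha> L k t = L / \<alpha> powr real_of_int k * cell_size \<alpha> 1 0 t"
  by (simp add: cell_size_def powr_add)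

lemma hiou_normalize:
  assumes "0 < \<alpha>" "0 < W0" "0 < H0"
  shows "hiou \<alpha> W0 H0 b_x b_y i j m n i1 i2 j1 j2 m1 m2 n1 n2 = hiou \<alpha> 1 1 0 0 0 0 0 0 i1 i2 j1 j2 m1 m2 n1 n2"
proof -
  have "0 < W0 / \<alpha> powr real_of_int i" "0 < H0 / \<alpha> powr real_of_int j"
    using assms by simp_all
  then show ?thesis
    unfolding hiou_def hbox_eq_cell cell_center_scale[OF assms(1), of W0] cell_center_scale[OF assms(1), of H0]
      cell_size_scale[OF assms(1), of W0] cell_size_scale[OF assms(1), of H0]
    by (rule IoU_scale)
qed

lemma quasiconcave_hiou_offsets:
  assumes "0 < \<alpha>" "\<alpha> < 1" "0 < W0" "0 < H0"
  shows "quasiconcave_on cube (\<lambda>t. hiou \<alpha> W0 H0 b_x b_y i j m n t i2 j1 j2 m1 m2 n1 n2)"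
    and "quasiconcave_on cube (\<lambda>t. hiou \<alpha> W0 H0 b_x b_y i j m n i1 t j1 j2 m1 m2 n1 n2)"
    and "quasiconcave_on cube (\<lambda>t. hiou \<alpha> W0 H0 b_x b_y i j m n i1 i2 t j2 m1 m2 n1 n2)"
    and "quasiconcave_on cube (\<lambda>t. hiou \<alpha> W0 H0 b_x b_y i j m n i1 i2 j1 t m1 m2 n1 n2)"
    and "quasiconcave_on cube (\<lambda>t. hiou \<alpha> W0 H0 b_x b_y i j m n i1 i2 j1 j2 t m2 n1 n2)"
    and "quasiconcave_on cube (\<lambda>t. hiou \<alpha> W0 H0 b_x b_y i j m n i1 i2 j1 j2 m1 t n1 n2)"
    and "quasiconcave_on cube (\<lambda>t. hiou \<alpha> W0 H0 b_x b_y i j m n i1 i2 j1 j2 m1 m2 t n2)"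
    and "quasiconcave_on cube (\<lambda>t. hiou \<alpha> W0 H0 b_x b_y i j m n i1 i2 j1 j2 m1 m2 n1 t)"
proof -
  have pos: "0 < cell_size \<alpha> W0 i s" "0 < cell_size \<alpha> H0 j s" for s
    using assms by (simp_all add: cell_size_pos)
  have size: "mono_on cube (cell_size \<alpha> W0 i)" "mono_on cube (cell_size \<alpha> H0 j)"
    using assms by (simp_all add: mono_imp_mono_on mono_cell_size)
  have center: "mono_on cube (cell_center \<alpha> W0 b_x i m)" "mono_on cube (cell_center \<alpha> H0 b_y j n)"
    using assms by (simp_all add: mono_imp_mono_on mono_cell_center)
  have first_box:
    "quasiconcave_on cube (\<lambda>t. IoU (hbox \<alpha> W0 H0 b_x b_y i j m n t jk mk nk) b)"
    "quasiconcave_on cube (\<lambda>t. IoU (hbox \<alpha> W0 H0 b_x b_y i j m n ik t mk nk) b)"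
    "quasiconcave_on cube (\<lambda>t. IoU (hbox \<alpha> W0 H0 b_x b_y i j m n ik jk t nk) b)"
    "quasiconcave_on cube (\<lambda>t. IoU (hbox \<alpha> W0 H0 b_x b_y i j m n ik jk mk t) b)"
    if "b = hbox \<alpha> W0 H0 b_x b_y i j m n ik' jk' mk' nk'" for b ik jk mk nk ik' jk' mk' nk'
    unfolding that hbox_eq_cell
    by (rule quasiconcave_on_precompose_mono[OF quasiconcave_IoU_width] 
          quasiconcave_on_precompose_mono[OF quasiconcave_IoU_height]
          quasiconcave_on_precompose_mono[OF quasiconcave_IoU_center_x]
          quasiconcave_on_precompose_mono[OF quasiconcave_IoU_center_y];
        use pos size center in auto)+
  show "quasiconcave_on cube (\<lambda>t. hiou \<alpha> W0 H0 b_x b_y i j m n t i2 j1 j2 m1 m2 n1 n2)"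
    "quasiconcave_on cube (\<lambda>t. hiou \<alpha> W0 H0 b_x b_y i j m n i1 i2 t j2 m1 m2 n1 n2)"
    "quasiconcave_on cube (\<lambda>t. hiou \<alpha> W0 H0 b_x b_y i j m n i1 i2 j1 j2 t m2 n1 n2)"
    "quasiconcave_on cube (\<lambda>t. hiou \<alpha> W0 H0 b_x b_y i j m n i1 i2 j1 j2 m1 m2 t n2)"
    unfolding hiou_def by (rule first_box, rule refl)+
  show "quasiconcave_on cube (\<lambda>t. hiou \<alpha> W0 H0 b_x b_y i j m n i1 t j1 j2 m1 m2 n1 n2)"
    "quasiconcave_on cube (\<lambda>t. hiou \<alpha> W0 H0 b_x b_y i j m n i1 i2 j1 t m1 m2 n1 n2)"
    "quasiconcave_on cube (\<lambda>t. hiou \<alpha> W0 H0 b_x b_y i j m n i1 i2 j1 j2 m1 t n1 n2)"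
    "quasiconcave_on cube (\<lambda>t. hiou \<alpha> W0 H0 b_x b_y i j m n i1 i2 j1 j2 m1 m2 n1 t)"
    unfolding hiou_def IoU_commute[of "hbox \<alpha> W0 H0 b_x b_y i j m n i1 j1 m1 n1"]
    by (rule first_box, rule refl)+
qed

lemma hiou_vertex_le:
  assumes "0 < \<alpha>" "\<alpha> < 1" "0 < W0" "0 < H0"
    and "i1 \<in> cube" "i2 \<in> cube" "j1 \<in> cube" "j2 \<in> cube"
    and "m1 \<in> cube" "m2 \<in> cube" "n1 \<in> cube" "n2 \<in> cube"
  obtains i1' i2' j1' j2' m1' m2' n1' n2' where
    "i1' \<in> vert" "i2' \<in> vert" "j1' \<in> vert" "j2' \<in> vert"
    "m1' \<in> vert" "m2' \<in> vert" "n1' \<in> vert" "n2' \<in> vert"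
    "hiou \<alpha> W0 H0 b_x b_y i j m n i1' i2' j1' j2' m1' m2' n1' n2'
       \<le> hiou \<alpha> W0 H0 b_x b_y i j m n i1 i2 j1 j2 m1 m2 n1 n2"
proof -
  define f where "f q = hiou \<alpha> W0 H0 b_x b_y i j m n (q 0) (q 1) (q 2) (q 3) (q 4) (q 5) (q 6) (q 7)"
    for q :: "nat \<Rightarrow> real"
  define ps where "ps = [i1, i2, j1, j2, m1, m2, n1, n2]"
  have qc: "quasiconcave_on cube (\<lambda>t. f (q(k := t)))" if "k < 8" for k q
  proof -
    have "k = 0 \<or> k = 1 \<or> k = 2 \<or> k = 3 \<or> k = 4 \<or> k = 5 \<or> k = 6 \<or> k = 7"
      using that by presburger
    then show ?thesis
      unfolding f_def using quasiconcave_hiou_offsets[OF assms(1-4)] by (elim disjE) simp_all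
  qed
  have "set ps \<subseteq> cube" "length ps = 8" using assms(5-12) by (simp_all add: ps_def)
  then have "\<forall>k<8. (!) ps k \<in> cube" by (metis nth_mem subsetD)
  then obtain v where v: "\<forall>k<8. v k \<in> vert" "f v \<le> f ((!) ps)"
    using coordinatewise_quasiconcave_vertex_le[of 8 f 8 "(!) ps"] qc by blast
  show thesis
    by (rule that[of "v 0" "v 1" "v 2" "v 3" "v 4" "v 5" "v 6" "v 7"])
      (use v in \<open>simp_all add: f_def ps_def\<close>)
qed

lemma vertex_valuesI:
  assumes "i1 \<in> vert" "i2 \<in> vert" "j1 \<in> vert" "j2 \<in> vert"
    "m1 \<in> vert" "m2 \<in> vert" "n1 \<in> vert" "n2 \<in> vert"
  shows "g i1 i2 j1 j2 m1 m2 n1 n2 \<in> {g i1 i2 j1 j2 m1 m2 n1 n2 | i1 i2 j1 j2 m1 m2 n1 n2.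
      i1 \<in> vert \<and> i2 \<in> vert \<and> j1 \<in> vert \<and> j2 \<in> vert \<and>
      m1 \<in> vert \<and> m2 \<in> vert \<and> n1 \<in> vert \<and> n2 \<in> vert}"
  unfolding mem_Collect_eq by (intro exI conjI, rule refl, (rule assms)+)

lemma vertex_valuesE:
  assumes "v \<in> {g i1 i2 j1 j2 m1 m2 n1 n2 | i1 i2 j1 j2 m1 m2 n1 n2.
      i1 \<in> vert \<and> i2 \<in> vert \<and> j1 \<in> vert \<and> j2 \<in> vert \<and>
      m1 \<in> vert \<and> m2 \<in> vert \<and> n1 \<in> vert \<and> n2 \<in> vert}"
  obtains i1 i2 j1 j2 m1 m2 n1 n2 where
    "i1 \<in> vert" "i2 \<in> vert" "j1 \<in> vert" "j2 \<in> vert"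
    "m1 \<in> vert" "m2 \<in> vert" "n1 \<in> vert" "n2 \<in> vert" "v = g i1 i2 j1 j2 m1 m2 n1 n2"
  using assms by (elim CollectE exE conjE) (rule that; assumption)

lemma finite_vertex_values:
  "finite {g i1 i2 j1 j2 m1 m2 n1 n2 | i1 i2 j1 j2 m1 m2 n1 n2.
      i1 \<in> vert \<and> i2 \<in> vert \<and> j1 \<in> vert \<and> j2 \<in> vert \<and>
      m1 \<in> vert \<and> m2 \<in> vert \<and> n1 \<in> vert \<and> n2 \<in> vert}" (is "finite ?V")
proof (rule finite_subset)
  let ?F = "\<lambda>(i1, i2, j1, j2, m1, m2, n1, n2). g i1 i2 j1 j2 m1 m2 n1 n2"
  show "?V \<subseteq> ?F ` (vert \<times> vert \<times> vert \<times> vert \<times> vert \<times> vert \<times> vert \<times> vert)"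
  proof
    fix v assume "v \<in> ?V"
    then obtain i1 i2 j1 j2 m1 m2 n1 n2 where
      "i1 \<in> vert" "i2 \<in> vert" "j1 \<in> vert" "j2 \<in> vert"
      "m1 \<in> vert" "m2 \<in> vert" "n1 \<in> vert" "n2 \<in> vert" "v = g i1 i2 j1 j2 m1 m2 n1 n2"
      by (rule vertex_valuesE)
    then show "v \<in> ?F ` (vert \<times> vert \<times> vert \<times> vert \<times> vert \<times> vert \<times> vert \<times> vert)"
      by (intro image_eqI[where x = "(i1, i2, j1, j2, m1, m2, n1, n2)"]) simp_all
  qed
  show "finite (?F ` (vert \<times> vert \<times> vert \<times> vert \<times> vert \<times> vert \<times> vert \<times> vert))"
    by (intro finite_imageI finite_cartesian_product) (simp_all add: vert_def)
qed

lemma vertex_min_le_hiou: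
  assumes "0 < \<alpha>" "\<alpha> < 1" "0 < W0" "0 < H0"
    and "i1 \<in> cube" "i2 \<in> cube" "j1 \<in> cube" "j2 \<in> cube"
    and "m1 \<in> cube" "m2 \<in> cube" "n1 \<in> cube" "n2 \<in> cube"
  shows "vertex_min \<alpha> W0 H0 b_x b_y i j m n \<le> hiou \<alpha> W0 H0 b_x b_y i j m n i1 i2 j1 j2 m1 m2 n1 n2"
proof -
  obtain i1' i2' j1' j2' m1' m2' n1' n2' where
    "i1' \<in> vert" "i2' \<in> vert" "j1' \<in> vert" "j2' \<in> vert"
    "m1' \<in> vert" "m2' \<in> vert" "n1' \<in> vert" "n2' \<in> vert"
    and le: "hiou \<alpha> W0 H0 b_x b_y i j m n i1' i2' j1' j2' m1' m2' n1' n2'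
        \<le> hiou \<alpha> W0 H0 b_x b_y i j m n i1 i2 j1 j2 m1 m2 n1 n2"
    by (rule hiou_vertex_le[OF assms])
  then have "vertex_min \<alpha> W0 H0 b_x b_y i j m n
      \<le> hiou \<alpha> W0 H0 b_x b_y i j m n i1' i2' j1' j2' m1' m2' n1' n2'"
    unfolding vertex_min_def by (intro Min_le finite_vertex_values vertex_valuesI)
  with le show ?thesis by linarith
qed

lemma vertex_min_attained:
  obtains i1 i2 j1 j2 m1 m2 n1 n2 where
    "i1 \<in> vert" "i2 \<in> vert" "j1 \<in> vert" "j2 \<in> vert"
    "m1 \<in> vert" "m2 \<in> vert" "n1 \<in> vert" "n2 \<in> vert"
    "vertex_min \<alpha> W0 H0 b_x b_y i j m n = hiou \<alpha> W0 H0 b_x b_y i j m n i1 i2 j1 j2 m1 m2 n1 n2"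
proof -
  have "-1/2 \<in> vert" by (simp add: vert_def)
  then have "vertex_min \<alpha> W0 H0 b_x b_y i j m n \<in>
      {hiou \<alpha> W0 H0 b_x b_y i j m n i1 i2 j1 j2 m1 m2 n1 n2 | i1 i2 j1 j2 m1 m2 n1 n2.
        i1 \<in> vert \<and> i2 \<in> vert \<and> j1 \<in> vert \<and> j2 \<in> vert \<and>
        m1 \<in> vert \<and> m2 \<in> vert \<and> n1 \<in> vert \<and> n2 \<in> vert}"
    unfolding vertex_min_def by (intro Min_in finite_vertex_values) (blast intro: vertex_valuesI)
  then show thesis by (elim vertex_valuesE) (rule that; assumption)
qed

lemma vertex_min_normalize:
  assumes "0 < \<alpha>" "0 < W0" "0 < H0"
  shows "vertex_min \<alpha> W0 H0 b_x b_y i j m n = vertex_min \<alpha> 1 1 0 0 0 0 0 0"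
  unfolding vertex_min_def hiou_normalize[OF assms] ..

theorem theorem2:
  fixes \<alpha> W0 H0 b_x b_y :: real and i j m n :: int
  assumes "0 < \<alpha>" "\<alpha> < 1" "(1 - \<alpha>) / (1 + \<alpha>) < sqrt \<alpha>"
    and "W0 > 0" "H0 > 0"
  shows "(\<exists>i1\<in>vert. \<exists>i2\<in>vert. \<exists>j1\<in>vert. \<exists>j2\<in>vert. \<exists>m1\<in>vert. \<exists>m2\<in>vert. \<exists>n1\<in>vert. \<exists>n2\<in>vert.
           \<forall>i1'\<in>cube. \<forall>i2'\<in>cube. \<forall>j1'\<in>cube. \<forall>j2'\<in>cube. \<forall>m1'\<in>cube. \<forall>m2'\<in>cube. \<forall>n1'\<in>cube. \<forall>n2'\<in>cube.
             hiou \<alpha> W0 H0 b_x b_y i j m n i1 i2 j1 j2 m1 m2 n1 n2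
               \<le> hiou \<alpha> W0 H0 b_x b_y i j m n i1' i2' j1' j2' m1' m2' n1' n2')
       \<and> (\<forall>i1\<in>cube. \<forall>i2\<in>cube. \<forall>j1\<in>cube. \<forall>j2\<in>cube. \<forall>m1\<in>cube. \<forall>m2\<in>cube. \<forall>n1\<in>cube. \<forall>n2\<in>cube.
             vertex_min \<alpha> W0 H0 b_x b_y i j m n \<le> hiou \<alpha> W0 H0 b_x b_y i j m n i1 i2 j1 j2 m1 m2 n1 n2)
       \<and> (\<forall>W0' H0' b_x' b_y' :: real. \<forall>i' j' m' n' :: int. W0' > 0 \<longrightarrow> H0' > 0 \<longrightarrow>
             vertex_min \<alpha> W0' H0' b_x' b_y' i' j' m' n' = vertex_min \<alpha> W0 H0 b_x b_y i j m n)"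
proof (intro conjI)
  show lower_bound: "\<forall>i1\<in>cube. \<forall>i2\<in>cube. \<forall>j1\<in>cube. \<forall>j2\<in>cube. \<forall>m1\<in>cube. \<forall>m2\<in>cube. \<forall>n1\<in>cube. \<forall>n2\<in>cube.
      vertex_min \<alpha> W0 H0 b_x b_y i j m n \<le> hiou \<alpha> W0 H0 b_x b_y i j m n i1 i2 j1 j2 m1 m2 n1 n2"
    using vertex_min_le_hiou[OF assms(1,2,4,5)] by simp
  obtain i1 i2 j1 j2 m1 m2 n1 n2 where
    "i1 \<in> vert" "i2 \<in> vert" "j1 \<in> vert" "j2 \<in> vert"
    "m1 \<in> vert" "m2 \<in> vert" "n1 \<in> vert" "n2 \<in> vert"
    and attained: "vertex_min \<alpha> W0 H0 b_x b_y i j m n = hiou \<alpha> W0 H0 b_x b_y i j m n i1 i2 j1 j2 m1 m2 n1 n2"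
    by (rule vertex_min_attained)
  with lower_bound show "\<exists>i1\<in>vert. \<exists>i2\<in>vert. \<exists>j1\<in>vert. \<exists>j2\<in>vert. \<exists>m1\<in>vert. \<exists>m2\<in>vert. \<exists>n1\<in>vert. \<exists>n2\<in>vert.
      \<forall>i1'\<in>cube. \<forall>i2'\<in>cube. \<forall>j1'\<in>cube. \<forall>j2'\<in>cube. \<forall>m1'\<in>cube. \<forall>m2'\<in>cube. \<forall>n1'\<in>cube. \<forall>n2'\<in>cube.
        hiou \<alpha> W0 H0 b_x b_y i j m n i1 i2 j1 j2 m1 m2 n1 n2
          \<le> hiou \<alpha> W0 H0 b_x b_y i j m n i1' i2' j1' j2' m1' m2' n1' n2'"
    unfolding attained by blast
  show "\<forall>W0' H0' b_x' b_y'. \<forall>i' j' m' n'. W0' > 0 \<longrightarrow> H0' > 0 \<longrightarrow>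
      vertex_min \<alpha> W0' H0' b_x' b_y' i' j' m' n' = vertex_min \<alpha> W0 H0 b_x b_y i j m n"
    using vertex_min_normalize[OF assms(1)] assms(4,5) by metis
qed

end
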